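(* Let $S$ be a monoid and let $\mathbb{C}$ be a class of $S$-acts closed under taking subacts and products. Let $r_{\mathbb{C}}$ be the Hoehnke radical defined by $r_{\mathbb{C}}(A)=\bigwedge\{\chi\in\mathrm{Con}(A): A/\chi\in\mathbb{C}\}$, and let $\mathbb{R}_{r_{\mathbb{C}}}=\{A: r_{\mathbb{C}}(A)=\nabla_A\}$. Then: (1) $\mathbb{R}_{r_{\mathbb{C}}}$ is closed under homomorphic images; (2) $\mathbb{R}_{r_{\mathbb{C}}}$ has the inductive property; (3) $\mathbb{R}_{r_{\mathbb{C}}}$ is closed under Rees extensions.
   Context: An $S$-act over a monoid $S$ is a set $A$ with an action $(s,a)\mapsto sa$ satisfying $s(ta)=(st)a$ and $1a=a$; homomorphisms are action-preserving maps. An $S$-act is trivial if $|A|\le1$. Classes of $S$-acts are assumed closed under isomorphic copies and to contain all trivial $S$-acts. $\mathrm{Con}(A)$ is the lattice of congruences (action-compatible equivalence relations) on $A$, with $\nabla_A=A\times A$. A Rees congruence is a congruence each of whose classes is a subact or a singleton; $\Sigma_\rho$ denotes the set of classes of $\rho$ that are non-trivial subacts. A (normal) Hoehnke radical is an assignment $r$ of a congruence $r(A)$ to each $S$-act $A$ such that homomorphisms $f:A\to B$ map $r(A)$-related pairs to $r(B)$-related pairs and $r(A/r(A))$ is the diagonal. A class $\mathbb{C}'$ has the inductive property if for every ascending chain $(A_i)_{i\in I}$ of subacts (of some $S$-act) with all $A_i\in\mathbb{C}'$, the union $\bigcup_i A_i\in\mathbb{C}'$. $\mathbb{C}'$ is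 closed under Rees extensions if whenever $A$ has a Rees congruence $\chi$ with $\Sigma_\chi\subseteq\mathbb{C}'$ and $A/\chi\in\mathbb{C}'$, then $A\in\mathbb{C}'$. *)

theory Defs
  imports "HOL-Library.FuncSet"
begin

definition is_act :: "'a set \<Rightarrow> ('s::monoid_mult \<Rightarrow> 'a \<Rightarrow> 'a) \<Rightarrow> bool" where
  "is_act A act \<longleftrightarrow>
     (\<forall>s. \<forall>a\<in>A. act s a \<in> A) \<and>
     (\<forall>a\<in>A. act 1 a = a) \<and>
     (\<forall>s t. \<forall>a\<in>A. act s (act t a) = act (s * t) a)"

definition is_subact :: "'a set \<Rightarrow> 'a set \<Rightarrow> ('s::monoid_mult \<Rightarrow> 'a \<Rightarrow> 'a) \<Rightarrow> bool" where
  "is_subact B A act \<longleftrightarrow> B \<subseteq> A \<and> (\<forall>s. \<forall>b\<in>B. act s b \<in> B)"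

definition trivial_set :: "'a set \<Rightarrow> bool" where
  "trivial_set A \<longleftrightarrow> (\<forall>x\<in>A. \<forall>y\<in>A. x = y)"

definition act_hom :: "'a set \<Rightarrow> ('s::monoid_mult \<Rightarrow> 'a \<Rightarrow> 'a) \<Rightarrow> 'b set \<Rightarrow> ('s \<Rightarrow> 'b \<Rightarrow> 'b)
    \<Rightarrow> ('a \<Rightarrow> 'b) \<Rightarrow> bool" where
  "act_hom A act B act' f \<longleftrightarrow>
     (\<forall>a\<in>A. f a \<in> B) \<and> (\<forall>s. \<forall>a\<in>A. f (act s a) = act' s (f a))"

definition act_iso :: "'a set \<Rightarrow> ('s::monoid_mult \<Rightarrow> 'a \<Rightarrow> 'a) \<Rightarrow> 'b set \<Rightarrow> ('s \<Rightarrow> 'b \<Rightarrow> 'b)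
    \<Rightarrow> ('a \<Rightarrow> 'b) \<Rightarrow> bool" where
  "act_iso A act B act' f \<longleftrightarrow> act_hom A act B act' f \<and> bij_betw f A B"

definition act_cong :: "'a set \<Rightarrow> ('s::monoid_mult \<Rightarrow> 'a \<Rightarrow> 'a) \<Rightarrow> 'a rel \<Rightarrow> bool" where
  "act_cong A act \<rho> \<longleftrightarrow> equiv A \<rho> \<and> (\<forall>s a b. (a, b) \<in> \<rho> \<longrightarrow> (act s a, act s b) \<in> \<rho>)"

definition quot_act :: "('s::monoid_mult \<Rightarrow> 'a \<Rightarrow> 'a) \<Rightarrow> 'a rel \<Rightarrow> 's \<Rightarrow> 'a set \<Rightarrow> 'a set" where
  "quot_act act \<rho> s X = (\<Union>x\<in>X. \<rho> `` {act s x})"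

definition prod_act :: "'i set \<Rightarrow> ('i \<Rightarrow> 's::monoid_mult \<Rightarrow> 'a \<Rightarrow> 'a) \<Rightarrow> 's \<Rightarrow> ('i \<Rightarrow> 'a) \<Rightarrow> ('i \<Rightarrow> 'a)" where
  "prod_act I acts s f = restrict (\<lambda>i. acts i s (f i)) I"

text \<open>A class of S-acts is represented by a predicate C on acts whose elements
  live in a universe type 'u.  An act of any other type belongs to the class
  iff it is isomorphic to a member of C.\<close>
definition in_class :: "('u set \<Rightarrow> ('s::monoid_mult \<Rightarrow> 'u \<Rightarrow> 'u) \<Rightarrow> bool)
    \<Rightarrow> 'b set \<Rightarrow> ('s \<Rightarrow> 'b \<Rightarrow> 'b) \<Rightarrow> bool" where
  "in_class C B act \<longleftrightarrow> (\<exists>U uact f. C U uact \<and> act_iso B act U uact f)"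

definition act_class :: "('u set \<Rightarrow> ('s::monoid_mult \<Rightarrow> 'u \<Rightarrow> 'u) \<Rightarrow> bool) \<Rightarrow> bool" where
  "act_class C \<longleftrightarrow>
     (\<forall>A act. C A act \<longrightarrow> is_act A act) \<and>
     (\<forall>A act. is_act A act \<and> trivial_set A \<longrightarrow> C A act) \<and>
     (\<forall>A act B act' f. C A act \<and> is_act B act' \<and> act_iso A act B act' f \<longrightarrow> C B act')"

definition closed_subacts :: "('u set \<Rightarrow> ('s::monoid_mult \<Rightarrow> 'u \<Rightarrow> 'u) \<Rightarrow> bool) \<Rightarrow> bool" where
  "closed_subacts C \<longleftrightarrow> (\<forall>A act B. C A act \<and> is_subact B A act \<longrightarrow> C B act)"

text \<open>Closure under products (indexed by sets of type 'i), relativised to the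
  universe: the product belongs to the class (i.e. every isomorphic copy of it
  in the universe is in C).\<close>
definition closed_products :: "'i itself \<Rightarrow> ('u set \<Rightarrow> ('s::monoid_mult \<Rightarrow> 'u \<Rightarrow> 'u) \<Rightarrow> bool) \<Rightarrow> bool" where
  "closed_products _ C \<longleftrightarrow>
     (\<forall>(I::'i set) As acts. (\<forall>i\<in>I. C (As i) (acts i)) \<longrightarrow>
        (\<forall>P pact f. is_act P pact \<and> act_iso (Pi\<^sub>E I As) (prod_act I acts) P pact f \<longrightarrow> C P pact))"

text \<open>The Hoehnke radical r_C(A) = meet of all congruences chi with A/chi in C
  (the meet in Con(A) of the empty family being nabla_A).\<close>
definition rad :: "('u set \<Rightarrow> ('s::monoid_mult \<Rightarrow> 'u \<Rightarrow> 'u) \<Rightarrow> bool)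
    \<Rightarrow> 'b set \<Rightarrow> ('s \<Rightarrow> 'b \<Rightarrow> 'b) \<Rightarrow> 'b rel" where
  "rad C A act = (A \<times> A) \<inter> \<Inter>{\<chi>. act_cong A act \<chi> \<and> in_class C (A // \<chi>) (quot_act act \<chi>)}"

definition rad_class :: "('u set \<Rightarrow> ('s::monoid_mult \<Rightarrow> 'u \<Rightarrow> 'u) \<Rightarrow> bool)
    \<Rightarrow> 'b set \<Rightarrow> ('s \<Rightarrow> 'b \<Rightarrow> 'b) \<Rightarrow> bool" where
  "rad_class C A act \<longleftrightarrow> is_act A act \<and> rad C A act = A \<times> A"

definition rees_cong :: "'a set \<Rightarrow> ('s::monoid_mult \<Rightarrow> 'a \<Rightarrow> 'a) \<Rightarrow> 'a rel \<Rightarrow> bool" where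
  "rees_cong A act \<chi> \<longleftrightarrow> act_cong A act \<chi> \<and>
     (\<forall>X\<in>A // \<chi>. is_subact X A act \<or> (\<exists>x. X = {x}))"

definition Sigma_cls :: "'a set \<Rightarrow> ('s::monoid_mult \<Rightarrow> 'a \<Rightarrow> 'a) \<Rightarrow> 'a rel \<Rightarrow> 'a set set" where
  "Sigma_cls A act \<chi> = {X \<in> A // \<chi>. is_subact X A act \<and> \<not> trivial_set X}"

end

theory Submission
  imports Defs
begin

text \<open>An act A lies in the radical class iff every homomorphic image of A that belongs to the
  class is trivial: such an image g(A) is isomorphic to A modulo the kernel of g, so this kernel
  contains r(A).  Each closure property then reduces to showing that images in the class are
  trivial.  Images of images are images.  In a chain any two elements lie in a common member Y,
  and the image of Y is a subact of an act of the class, hence in the class and trivial.  For a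
  Rees congruence \<chi> on A, an image in the class collapses each non-trivial subact class of \<chi>
  (and the other classes are singletons), so it factors through A/\<chi>.\<close>

lemma quot_act_Image:
  assumes "act_cong A act \<chi>" "a \<in> A"
  shows "quot_act act \<chi> s (\<chi>``{a}) = \<chi>``{act s a}"
proof -
  have equiv: "equiv A \<chi>" using assms(1) unfolding act_cong_def by blast
  have "\<chi>``{act s x} = \<chi>``{act s a}" if "x \<in> \<chi>``{a}" for x
  proof -
    from that have "(act s a, act s x) \<in> \<chi>" using assms(1) unfolding act_cong_def by blast
    then show ?thesis using equiv by (metis equiv_class_eq)
  qed
  moreover have "a \<in> \<chi>``{a}" using equiv assms(2) by (rule equiv_class_self)
  ultimately show ?thesis unfolding quot_act_def by blast
qed

lemma act_hom_quotient_map: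
  assumes "act_cong A act \<chi>"
  shows "act_hom A act (A//\<chi>) (quot_act act \<chi>) (\<lambda>a. \<chi>``{a})"
  unfolding act_hom_def using quot_act_Image[OF assms] by (auto intro: quotientI)

lemma image_quotient_map: "(\<lambda>a. \<chi>``{a}) ` A = A//\<chi>"
  unfolding quotient_def by auto

lemma act_hom_comp:
  "act_hom A act B act' f \<Longrightarrow> act_hom B act' C act'' g \<Longrightarrow> act_hom A act C act'' (g \<circ> f)"
  unfolding act_hom_def by auto

lemma act_iso_comp:
  "act_iso A act B act' f \<Longrightarrow> act_iso B act' C act'' g \<Longrightarrow> act_iso A act C act'' (g \<circ> f)"
  unfolding act_iso_def by (auto intro: act_hom_comp bij_betw_trans)

lemma in_class_act_iso:
  assumes "act_iso A act B act' h" "in_class C B act'"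
  shows "in_class C A act"
  using assms act_iso_comp unfolding in_class_def by blast

lemma act_hom_subset: "act_hom A act B act' g \<Longrightarrow> A' \<subseteq> A \<Longrightarrow> act_hom A' act B act' g"
  unfolding act_hom_def by blast

lemma act_hom_image_subact:
  assumes "is_subact A' A act" "act_hom A act B act' g"
  shows "is_subact (g`A') B act'"
  unfolding is_subact_def
proof (intro conjI allI ballI)
  show "g`A' \<subseteq> B" using assms unfolding is_subact_def act_hom_def by blast
  fix s b assume "b \<in> g`A'"
  then obtain a where a: "a \<in> A'" "b = g a" by blast
  then have "act' s b = g (act s a)" using assms unfolding is_subact_def act_hom_def by auto
  then show "act' s b \<in> g`A'" using a(1) assms(1) unfolding is_subact_def by blast
qed

lemma in_class_subact:
  assumes "closed_subacts C" "in_class C B act" "is_subact B' B act"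
  shows "in_class C B' act"
proof -
  obtain U uact \<phi> where U: "C U uact" "act_iso B act U uact \<phi>"
    using assms(2) unfolding in_class_def by blast
  have "act_iso B' act (\<phi>`B') uact \<phi>"
    using U(2) assms(3) unfolding act_iso_def act_hom_def is_subact_def
    by (auto intro: bij_betw_subset)
  moreover have "C (\<phi>`B') uact"
    using assms(1) U act_hom_image_subact[OF assms(3)] unfolding closed_subacts_def act_iso_def by blast
  ultimately show ?thesis unfolding in_class_def by blast
qed

definition hom_kernel :: "'a set \<Rightarrow> ('a \<Rightarrow> 'b) \<Rightarrow> 'a rel" where
  "hom_kernel A g = {(a, b) \<in> A \<times> A. g a = g b}"

lemma act_cong_hom_kernel:
  assumes "is_act A act" "act_hom A act B act' g"
  shows "act_cong A act (hom_kernel A g)"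
proof -
  have "equiv A (hom_kernel A g)"
    unfolding hom_kernel_def by (rule equivI) (auto simp: refl_on_def intro: symI transI)
  moreover have "(act s a, act s b) \<in> hom_kernel A g" if "(a, b) \<in> hom_kernel A g" for s a b
    using assms that unfolding hom_kernel_def is_act_def act_hom_def by auto
  ultimately show ?thesis unfolding act_cong_def by blast
qed

lemma act_hom_factor_quotient:
  assumes "act_cong A act \<chi>" "act_hom A act B act' g"
    and const: "\<And>a b. (a, b) \<in> \<chi> \<Longrightarrow> g a = g b"
  obtains h where "act_hom (A//\<chi>) (quot_act act \<chi>) (g`A) act' h" "h ` (A//\<chi>) = g`A"
    and "\<And>a. a \<in> A \<Longrightarrow> h (\<chi>``{a}) = g a"
proof
  have equiv: "equiv A \<chi>" using assms(1) unfolding act_cong_def by blast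
  show lift: "the_elem (g ` \<chi>``{a}) = g a" if "a \<in> A" for a
  proof -
    have "\<chi>``{a} \<noteq> {}" using equiv_class_self[OF equiv that] by blast
    moreover have "g b = g a" if "b \<in> \<chi>``{a}" for b using const that by (metis Image_singleton_iff)
    ultimately show ?thesis by (rule the_elem_image_unique)
  qed
  have "(\<lambda>X. the_elem (g`X)) ` (A//\<chi>) = (\<lambda>a. the_elem (g ` \<chi>``{a})) ` A"
    by (simp add: image_quotient_map[symmetric] image_image)
  also have "\<dots> = g`A" by (rule image_cong) (simp_all add: lift)
  finally show "(\<lambda>X. the_elem (g`X)) ` (A//\<chi>) = g`A" .
  have closed: "act s a \<in> A" if "a \<in> A" for s a
    using assms(1) that unfolding act_cong_def equiv_def refl_on_def by blast
  show "act_hom (A//\<chi>) (quot_act act \<chi>) (g`A) act' (\<lambda>X. the_elem (g`X))"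
    unfolding act_hom_def
  proof (intro conjI ballI allI)
    fix X assume "X \<in> A//\<chi>"
    then obtain a where "a \<in> A" "X = \<chi>``{a}" by (rule quotientE)
    then show "the_elem (g`X) \<in> g`A" using lift by simp
  next
    fix s X assume "X \<in> A//\<chi>"
    then obtain a where a: "a \<in> A" "X = \<chi>``{a}" by (rule quotientE)
    then have "the_elem (g ` quot_act act \<chi> s X) = g (act s a)"
      using lift closed quot_act_Image[OF assms(1)] by simp
    also have "\<dots> = act' s (g a)" using assms(2) a(1) unfolding act_hom_def by blast
    finally show "the_elem (g ` quot_act act \<chi> s X) = act' s (the_elem (g`X))"
      using a lift by simp
  qed
qed

lemma rad_class_trivial_image:
  assumes "rad_class C A act" "act_hom A act B act' g" "in_class C (g`A) act'"
  shows "trivial_set (g`A)"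
proof -
  have act: "is_act A act" using assms(1) unfolding rad_class_def by blast
  let ?\<kappa> = "hom_kernel A g"
  have cong: "act_cong A act ?\<kappa>" using act_cong_hom_kernel[OF act assms(2)] .
  then have equiv: "equiv A ?\<kappa>" unfolding act_cong_def by blast
  obtain h where h: "act_hom (A//?\<kappa>) (quot_act act ?\<kappa>) (g`A) act' h"
    and onto: "h ` (A//?\<kappa>) = g`A" and lift: "\<And>a. a \<in> A \<Longrightarrow> h (?\<kappa>``{a}) = g a"
    using act_hom_factor_quotient[OF cong assms(2)] unfolding hom_kernel_def by blast
  have "inj_on h (A//?\<kappa>)"
    using lift equiv by (auto elim!: quotientE intro!: inj_onI simp: equiv_class_eq_iff hom_kernel_def)
  with onto have "act_iso (A//?\<kappa>) (quot_act act ?\<kappa>) (g`A) act' h"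
    using h unfolding act_iso_def by (simp add: bij_betw_def)
  then have "in_class C (A//?\<kappa>) (quot_act act ?\<kappa>)"
    using assms(3) by (rule in_class_act_iso)
  then have "rad C A act \<subseteq> ?\<kappa>" unfolding rad_def using cong by blast
  then show ?thesis
    using assms(1) unfolding rad_class_def trivial_set_def hom_kernel_def by blast
qed

lemma rad_class_trivial_image_in_class:
  assumes "closed_subacts C" "rad_class C A act" "act_hom A act B act' g" "in_class C B act'"
  shows "trivial_set (g`A)"
proof -
  have "is_subact A A act" using assms(2) unfolding rad_class_def is_act_def is_subact_def by blast
  then have "in_class C (g`A) act'"
    using in_class_subact[OF assms(1,4)] act_hom_image_subact assms(3) by blast
  with assms(2,3) show ?thesis by (rule rad_class_trivial_image)
qed

lemma rad_classI:
  assumes "is_act A act"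
    and "\<And>\<chi>. act_cong A act \<chi> \<Longrightarrow> in_class C (A//\<chi>) (quot_act act \<chi>) \<Longrightarrow> trivial_set (A//\<chi>)"
  shows "rad_class C A act"
proof -
  have "A \<times> A \<subseteq> \<chi>" if "act_cong A act \<chi>" "in_class C (A//\<chi>) (quot_act act \<chi>)" for \<chi>
  proof (rule subrelI)
    fix a b assume ab: "(a, b) \<in> A \<times> A"
    have equiv: "equiv A \<chi>" using that(1) unfolding act_cong_def by blast
    have "trivial_set (A//\<chi>)" using assms(2) that .
    moreover have "\<chi>``{a} \<in> A//\<chi>" "\<chi>``{b} \<in> A//\<chi>" using ab by (auto intro: quotientI)
    ultimately have "\<chi>``{a} = \<chi>``{b}" unfolding trivial_set_def by blast
    then show "(a, b) \<in> \<chi>" using ab eq_equiv_class_iff[OF equiv] by blast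
  qed
  then have "rad C A act = A \<times> A" unfolding rad_def by blast
  with assms(1) show ?thesis unfolding rad_class_def by blast
qed

lemma rad_class_hom_image:
  assumes "rad_class C A act" "is_act B act'" "act_hom A act B act' f" "f ` A = B"
  shows "rad_class C B act'"
proof (rule rad_classI[OF assms(2)])
  fix \<chi> assume cong: "act_cong B act' \<chi>" and cl: "in_class C (B//\<chi>) (quot_act act' \<chi>)"
  let ?g = "(\<lambda>b. \<chi>``{b}) \<circ> f"
  have "act_hom A act (B//\<chi>) (quot_act act' \<chi>) ?g"
    using assms(3) act_hom_quotient_map[OF cong] by (rule act_hom_comp)
  moreover have "?g ` A = B//\<chi>" using assms(4) image_quotient_map by (metis image_comp)
  ultimately show "trivial_set (B//\<chi>)"
    using rad_class_trivial_image[OF assms(1)] cl by metis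
qed

lemma rad_class_Union_chain:
  assumes "closed_subacts C" "is_act X act"
    and sub: "\<And>Y. Y \<in> \<A> \<Longrightarrow> is_subact Y X act \<and> rad_class C Y act"
    and chain: "chain\<^sub>\<subseteq> \<A>"
  shows "rad_class C (\<Union>\<A>) act"
proof (rule rad_classI)
  show "is_act (\<Union>\<A>) act"
    using assms(2) sub unfolding is_act_def is_subact_def by blast
  fix \<chi> assume cong: "act_cong (\<Union>\<A>) act \<chi>" and cl: "in_class C (\<Union>\<A>//\<chi>) (quot_act act \<chi>)"
  let ?\<pi> = "\<lambda>a. \<chi>``{a}"
  have collapse: "trivial_set (?\<pi> ` Y)" if Y: "Y \<in> \<A>" for Y
  proof (rule rad_class_trivial_image_in_class[OF assms(1) _ _ cl])
    show "rad_class C Y act" using sub Y by blast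
    show "act_hom Y act (\<Union>\<A>//\<chi>) (quot_act act \<chi>) ?\<pi>"
      using act_hom_quotient_map[OF cong] by (rule act_hom_subset) (use Y in blast)
  qed
  then show "trivial_set (\<Union>\<A>//\<chi>)"
    unfolding trivial_set_def
  proof (intro ballI)
    fix P Q assume "P \<in> \<Union>\<A>//\<chi>" "Q \<in> \<Union>\<A>//\<chi>"
    then obtain a b where ab: "a \<in> \<Union>\<A>" "b \<in> \<Union>\<A>" "P = ?\<pi> a" "Q = ?\<pi> b"
      by (auto elim!: quotientE)
    then obtain Y where Y: "Y \<in> \<A>" "a \<in> Y" "b \<in> Y" using chain unfolding chain_subset_def by blast
    then have "?\<pi> a \<in> ?\<pi> ` Y" "?\<pi> b \<in> ?\<pi> ` Y" by simp_all
    with collapse[OF Y(1)] show "P = Q" using ab(3,4) unfolding trivial_set_def by blast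
  qed
qed

lemma rad_class_Rees_extension:
  assumes "closed_subacts C" "is_act A act" "rees_cong A act \<chi>"
    and Sigma: "\<And>X. X \<in> Sigma_cls A act \<chi> \<Longrightarrow> rad_class C X act"
    and quot: "rad_class C (A//\<chi>) (quot_act act \<chi>)"
  shows "rad_class C A act"
proof (rule rad_classI[OF assms(2)])
  have cong: "act_cong A act \<chi>" using assms(3) unfolding rees_cong_def by blast
  fix \<theta> assume cong': "act_cong A act \<theta>" and cl: "in_class C (A//\<theta>) (quot_act act \<theta>)"
  let ?\<pi> = "\<lambda>a. \<theta>``{a}"
  have hom: "act_hom A act (A//\<theta>) (quot_act act \<theta>) ?\<pi>"
    using act_hom_quotient_map[OF cong'] .
  have collapse: "trivial_set (?\<pi> ` X)" if X: "X \<in> A//\<chi>" for X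
  proof (cases "X \<in> Sigma_cls A act \<chi>")
    case True
    then have "is_subact X A act" "rad_class C X act" using Sigma unfolding Sigma_cls_def by auto
    moreover from this(1) have "act_hom X act (A//\<theta>) (quot_act act \<theta>) ?\<pi>"
      by (intro act_hom_subset[OF hom]) (simp add: is_subact_def)
    ultimately show ?thesis using rad_class_trivial_image_in_class[OF assms(1) _ _ cl] by blast
  next
    case False
    then have "trivial_set X" using X assms(3) unfolding rees_cong_def Sigma_cls_def trivial_set_def by auto
    then show ?thesis unfolding trivial_set_def by auto
  qed
  have \<chi>_in_kernel: "?\<pi> a = ?\<pi> b" if "(a, b) \<in> \<chi>" for a b
  proof -
    have equiv: "equiv A \<chi>" using cong unfolding act_cong_def by blast
    with that have a: "a \<in> A" and b: "b \<in> \<chi>``{a}" by (auto simp: equiv_class_eq_iff)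
    have "?\<pi> a \<in> ?\<pi> ` \<chi>``{a}" using equiv_class_self[OF equiv a] by (rule imageI)
    moreover have "?\<pi> b \<in> ?\<pi> ` \<chi>``{a}" using b by (rule imageI)
    moreover have "trivial_set (?\<pi> ` \<chi>``{a})" using a by (intro collapse quotientI)
    ultimately show ?thesis unfolding trivial_set_def by blast
  qed
  obtain h where h: "act_hom (A//\<chi>) (quot_act act \<chi>) (?\<pi> ` A) (quot_act act \<theta>) h"
    and "h ` (A//\<chi>) = ?\<pi> ` A"
    using act_hom_factor_quotient[OF cong hom \<chi>_in_kernel] by metis
  then have onto: "h ` (A//\<chi>) = A//\<theta>" by (simp only: image_quotient_map)
  show "trivial_set (A//\<theta>)"
    using rad_class_trivial_image[OF quot h] cl unfolding onto .
qed

theorem lemma2p4: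
  fixes C :: "'u set \<Rightarrow> ('s::monoid_mult \<Rightarrow> 'u \<Rightarrow> 'u) \<Rightarrow> bool"
  assumes "act_class C"
    and "closed_subacts C"
    and "closed_products TYPE('i) C"
  shows
    "(\<forall>(A::'u set) act (B::'b set) act' f.
        rad_class C A act \<and> is_act B act' \<and> act_hom A act B act' f \<and> f ` A = B
        \<longrightarrow> rad_class C B act')
   \<and> (\<forall>(X::'u set) act (\<A>::'u set set).
        is_act X act \<and> (\<forall>Y\<in>\<A>. is_subact Y X act \<and> rad_class C Y act) \<and>
        (\<forall>Y\<in>\<A>. \<forall>Z\<in>\<A>. Y \<subseteq> Z \<or> Z \<subseteq> Y)
        \<longrightarrow> rad_class C (\<Union>\<A>) act)
   \<and> (\<forall>(A::'u set) act \<chi>.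
        is_act A act \<and> rees_cong A act \<chi> \<and>
        (\<forall>X\<in>Sigma_cls A act \<chi>. rad_class C X act) \<and>
        rad_class C (A // \<chi>) (quot_act act \<chi>)
        \<longrightarrow> rad_class C A act)"
proof (intro conjI allI impI; elim conjE)
  show "rad_class C B act'"
    if "rad_class C A act" "is_act B act'" "act_hom A act B act' f" "f ` A = B"
    for A :: "'u set" and act and B :: "'b set" and act' f
    using that by (rule rad_class_hom_image)
  show "rad_class C (\<Union>\<A>) act"
    if "is_act X act" "\<forall>Y\<in>\<A>. is_subact Y X act \<and> rad_class C Y act"
      "\<forall>Y\<in>\<A>. \<forall>Z\<in>\<A>. Y \<subseteq> Z \<or> Z \<subseteq> Y"
    for X :: "'u set" and act \<A>
    using rad_class_Union_chain[OF assms(2) that(1)] that(2,3) unfolding chain_subset_def by blast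
  show "rad_class C A act"
    if "is_act A act" "rees_cong A act \<chi>" "\<forall>X\<in>Sigma_cls A act \<chi>. rad_class C X act"
      "rad_class C (A // \<chi>) (quot_act act \<chi>)"
    for A :: "'u set" and act \<chi>
    using rad_class_Rees_extension[OF assms(2) that(1,2)] that(3,4) by blast
qed

end
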